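(* Fix $\delta\in[0,1)$ and $t\ge1$, and consider the logistic bandit interaction with actions chosen by THaTS. Let $A_t^{\mathrm{MU}}\in\arg\max_{a\in\mathcal A(S_t)}\max_{\theta\in\mathcal V_t}\dot\mu(\phi(S_t,a)^\top\theta)\|\phi(S_t,a)\|_{L_t^{-1}}$. Then almost surely $$\min_{\theta\in\mathcal E_t(\delta,\bar\theta_t)}U(S_t,A_t^{\mathrm{MU}},\theta,L_t)\cdot I(S_t,A_t^{\mathrm{MU}},L_t)\le\mathbb E\big[U(S_t,A_t,\bar\theta_t,L_t)\,\big|\,\mathcal F_{t-1},S_t\big],$$ where $I(s,a,L)=\int_{\mathbb S^{d-1}}\big|\big\langle x,\tfrac{L^{-1/2}\phi(s,a)}{\|L^{-1/2}\phi(s,a)\|}\big\rangle\big|\,\sigma(dx)$ with $\sigma$ the uniform probability measure on $\mathbb S^{d-1}$.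
   Context: Logistic setting: $\mu(x)=1/(1+e^{-x})$; context space $\mathcal S$ with distribution $\nu$; finite nonempty action sets $\mathcal A(s)$; features $\phi(s,a)\in\mathbb R^d$ with $\|\phi(s,a)\|\le1$; unknown $\theta_*$ with $\|\theta_*\|\le S$; $\mathbb B_d(S)$ the closed ball of radius $S$. Rounds: $S_t\sim\nu$ independent of the past, $A_t\in\mathcal A(S_t)$, $X_t\in\{0,1\}$ Bernoulli with mean $\mu(\phi(S_t,A_t)^\top\theta_* )$. $\mathcal F_{t-1}=\sigma((S_i,A_i,X_i)_{i<t}$, previous internal randomness$)$. $U(s,a,\theta,L)=\dot\mu(\phi(s,a)^\top\theta)\|\phi(s,a)\|_{L^{-1}}$, $\|x\|_M=\sqrt{x^\top Mx}$. With $\phi_i=\phi(S_i,A_i)$ and $\lambda>0$: $\mathcal L_t^\lambda(\theta)=\lambda\|\theta\|^2-\sum_{i<t}[X_i\log\mu(\phi_i^\top\theta)+(1-X_i)\log(1-\mu(\phi_i^\top\theta))]$; $\bar\theta_t=\arg\min_{\mathbb B_d(S)}\mathcal L_t^\lambda$; $\beta_t(\delta)>0$ a deterministic radius (in the paper $\beta_t=\rho_t+\rho_t^2/\sqrt{\lambda_T}$ with $\lambda_T=1\vee\frac{2d}{S}\log(e\sqrt{1+T/(4d)}\vee1/\delta)$, $\rho_t=(\frac12+S)\sqrt{\lambda_T}+\frac{4d}{\sqrt{\lambda_T}}\log(e\sqrt{1+t/(4d)}\vee1/\delta)$); $\mathcal E_t(\delta,\theta_\circ)=\{\theta\in\mathbb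 B_d(S):\mathcal L_t^\lambda(\theta)-\mathcal L_t^\lambda(\theta_\circ)\le2\beta_t(\delta)^2\}$; $\mathcal V_t=\bigcap_{i=1}^{t-1}\mathcal E_i(\delta,\bar\theta_i)$ (empty intersection $=\mathbb R^d$). $L_1=\lambda I$, $L_{i+1}=L_i+\dot\mu(\phi_i^\top\theta_i')\phi_i\phi_i^\top$ with $\theta_i'=\arg\min_{\theta\in\mathcal E_i(\delta,\bar\theta_i)}\dot\mu(\phi_i^\top\theta)$. THaTS rule at round $t$: given $\mathcal F_{t-1}$ and $S_t$, sample $\tilde\theta_t\sim\mathcal N(0,L_t^{-1})$ and choose $A_t\in\arg\max_{a\in\mathcal A(S_t)}\dot\mu(\phi(S_t,a)^\top\bar\theta_t)|\phi(S_t,a)^\top\tilde\theta_t|$. *)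

theory Defs
  imports "HOL-Analysis.Analysis" "HOL-Probability.Probability"
begin

definition mu :: "real \<Rightarrow> real" where
  "mu x = 1 / (1 + exp (- x))"

definition mudot :: "real \<Rightarrow> real" where
  "mudot x = deriv mu x"

definition wnorm :: "real^'d^'d \<Rightarrow> real^'d \<Rightarrow> real" where
  "wnorm M x = sqrt (x \<bullet> (M *v x))"

definition outer :: "real^'d \<Rightarrow> real^'d^'d" where
  "outer x = (\<chi> j k. x $ j * x $ k)"

definition inv_sqrt :: "real^'d^'d \<Rightarrow> real^'d^'d" where
  "inv_sqrt L = (THE M. transpose M = M \<and> (\<forall>x. x \<noteq> 0 \<longrightarrow> 0 < x \<bullet> (M *v x))
                         \<and> M ** M = matrix_inv L)"

definition U :: "('s \<Rightarrow> 'a \<Rightarrow> real^'d) \<Rightarrow> 's \<Rightarrow> 'a \<Rightarrow> real^'d \<Rightarrow> real^'d^'d \<Rightarrow> real" where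
  "U phi s a \<theta> L = mudot (phi s a \<bullet> \<theta>) * wnorm (matrix_inv L) (phi s a)"

text \<open>fs i = phi(S_i,A_i), xs i = X_i in {0,1}; rounds are indexed from 1,
  and the loss at round t uses the rounds i < t.\<close>
definition loss :: "real \<Rightarrow> (nat \<Rightarrow> real^'d) \<Rightarrow> (nat \<Rightarrow> real) \<Rightarrow> nat \<Rightarrow> real^'d \<Rightarrow> real" where
  "loss lam fs xs t \<theta> = lam * (norm \<theta>)\<^sup>2
     - (\<Sum>i\<in>{1..<t}. xs i * ln (mu (fs i \<bullet> \<theta>)) + (1 - xs i) * ln (1 - mu (fs i \<bullet> \<theta>)))"

definition Econf :: "real \<Rightarrow> real \<Rightarrow> (nat \<Rightarrow> real^'d) \<Rightarrow> (nat \<Rightarrow> real) \<Rightarrow> real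
                     \<Rightarrow> nat \<Rightarrow> real^'d \<Rightarrow> (real^'d) set" where
  "Econf lam S fs xs b t \<theta>0 =
     {\<theta> \<in> cball 0 S. loss lam fs xs t \<theta> - loss lam fs xs t \<theta>0 \<le> 2 * b\<^sup>2}"

text \<open>beta t delta is the radius beta_t(delta); thbar i is the constrained MLE of round i.\<close>
definition Vset :: "real \<Rightarrow> real \<Rightarrow> (nat \<Rightarrow> real^'d) \<Rightarrow> (nat \<Rightarrow> real) \<Rightarrow> (nat \<Rightarrow> real \<Rightarrow> real)
                     \<Rightarrow> real \<Rightarrow> (nat \<Rightarrow> real^'d) \<Rightarrow> nat \<Rightarrow> (real^'d) set" where
  "Vset lam S fs xs beta \<delta> thbar t =
     (\<Inter>i\<in>{1..<t}. Econf lam S fs xs (beta i \<delta>) i (thbar i))"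

definition Lmat :: "real \<Rightarrow> (nat \<Rightarrow> real^'d) \<Rightarrow> (nat \<Rightarrow> real^'d) \<Rightarrow> nat \<Rightarrow> real^'d^'d" where
  "Lmat lam fs thp t = lam *\<^sub>R mat 1 + (\<Sum>i\<in>{1..<t}. mudot (fs i \<bullet> thp i) *\<^sub>R outer (fs i))"

definition gauss_prec :: "real^'d^'d \<Rightarrow> (real^'d) measure" where
  "gauss_prec L = density lborel
     (\<lambda>\<theta>. ennreal (sqrt (det L) / (2 * pi) powr (real CARD('d) / 2)
                     * exp (- (\<theta> \<bullet> (L *v \<theta>)) / 2)))"

text \<open>Uniform probability on S^{d-1}: the normalised cone measure, i.e. the image of the
  uniform distribution on the unit ball under radial projection x / |x|.\<close>
definition sphere_unif :: "(real^'d) measure" where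
  "sphere_unif = distr (uniform_measure lborel (ball 0 1)) borel sgn"

definition Iint :: "('s \<Rightarrow> 'a \<Rightarrow> real^'d) \<Rightarrow> 's \<Rightarrow> 'a \<Rightarrow> real^'d^'d \<Rightarrow> real" where
  "Iint phi s a L = (\<integral>x. \<bar>x \<bullet> sgn (inv_sqrt L *v phi s a)\<bar> \<partial>(sphere_unif :: (real^'d) measure))"

end

theory Submission
  imports Defs
begin

(*
  Let theta ~ N(0, L^-1) and let a be any action.
  The THaTS action A = sel theta beats a in the selection score, and Cauchy-Schwarz in the
  L-norm gives |phi_A . theta| <= |phi_A|_(L^-1) |theta|_L; hence pointwise
    U(s, A, thbar, L) >= mudot(phi_a . thbar) |phi_a . theta| / |theta|_L.
  Writing theta = L^(-1/2) z with z standard Gaussian, the right-hand side has expectation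
  mudot(phi_a . thbar) |phi_a|_(L^-1) E |<z / |z|, u>| for a unit vector u, and z / |z| is
  uniform on the sphere, so this is U(s, a, thbar, L) I(s, a, L). The minimum over the
  confidence set is at most the value at its centre thbar.

  The Gaussian computation diagonalises L in an orthonormal eigenbasis, uses rotation
  invariance of Lebesgue measure, and slices the Gaussian weight into balls (layer cake).
*)

section \<open>Rotation invariance of Lebesgue measure\<close>

text \<open>The change-of-variables theorems of the library are stated for index types of class
  \<open>wellorder\<close>; we transport them along a copy of the index type ordered by \<^const>\<open>to_nat\<close>.\<close>

typedef 'i wo_copy = "UNIV :: 'i set" by simp

instance wo_copy :: (finite) finite
proof
  have "(UNIV :: 'a wo_copy set) = Abs_wo_copy ` UNIV"
    by (metis Rep_wo_copy_inverse surj_def)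
  then show "finite (UNIV :: 'a wo_copy set)" by (metis finite_imageI finite)
qed

instantiation wo_copy :: (finite) linorder
begin
definition less_eq_wo_copy :: "'a wo_copy \<Rightarrow> 'a wo_copy \<Rightarrow> bool" where
  "x \<le> y \<longleftrightarrow> to_nat (Rep_wo_copy x) \<le> to_nat (Rep_wo_copy y)"
definition less_wo_copy :: "'a wo_copy \<Rightarrow> 'a wo_copy \<Rightarrow> bool" where
  "x < y \<longleftrightarrow> to_nat (Rep_wo_copy x) < to_nat (Rep_wo_copy y)"
instance
proof
  fix x y z :: "'a wo_copy"
  show "x < y \<longleftrightarrow> x \<le> y \<and> \<not> y \<le> x" by (auto simp: less_eq_wo_copy_def less_wo_copy_def)
  show "x \<le> x" by (simp add: less_eq_wo_copy_def)
  show "x \<le> y \<Longrightarrow> y \<le> z \<Longrightarrow> x \<le> z" by (simp add: less_eq_wo_copy_def)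
  show "x \<le> y \<Longrightarrow> y \<le> x \<Longrightarrow> x = y"
    by (simp add: less_eq_wo_copy_def Rep_wo_copy_inject[symmetric])
  show "x \<le> y \<or> y \<le> x" by (auto simp: less_eq_wo_copy_def)
qed
end

instance wo_copy :: (finite) wellorder
proof
  fix P :: "'a wo_copy \<Rightarrow> bool" and a
  assume step: "\<And>x. (\<And>y. y < x \<Longrightarrow> P y) \<Longrightarrow> P x"
  show "P a"
    by (induction a rule: measure_induct_rule[of "\<lambda>x. to_nat (Rep_wo_copy x)"])
       (rule step, simp add: less_wo_copy_def)
qed

definition vec_to_wo_copy :: "real^'i \<Rightarrow> real^'i wo_copy" where
  "vec_to_wo_copy x = (\<chi> j. x $ Rep_wo_copy j)"

definition vec_of_wo_copy :: "real^'i wo_copy \<Rightarrow> real^'i" where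
  "vec_of_wo_copy y = (\<chi> i. y $ Abs_wo_copy i)"

lemma vec_to_of_wo_copy [simp]: "vec_to_wo_copy (vec_of_wo_copy y) = y"
  by (simp add: vec_to_wo_copy_def vec_of_wo_copy_def vec_eq_iff Rep_wo_copy_inverse)

lemma vec_of_to_wo_copy [simp]: "vec_of_wo_copy (vec_to_wo_copy x) = x"
  by (simp add: vec_to_wo_copy_def vec_of_wo_copy_def vec_eq_iff Abs_wo_copy_inverse)

lemma linear_vec_to_wo_copy: "linear vec_to_wo_copy"
  by (auto simp: linear_iff vec_to_wo_copy_def vec_eq_iff)

lemma linear_vec_of_wo_copy: "linear vec_of_wo_copy"
  by (auto simp: linear_iff vec_of_wo_copy_def vec_eq_iff)

lemma borel_measurable_linear:
  fixes f :: "'a::euclidean_space \<Rightarrow> 'b::euclidean_space"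
  shows "linear f \<Longrightarrow> f \<in> borel_measurable borel"
  by (intro borel_measurable_continuous_onI linear_continuous_on
      linear_conv_bounded_linear[THEN iffD1])

lemma borel_measurable_matrix_vector_mult [measurable]:
  "(\<lambda>x. A *v x) \<in> borel_measurable (borel :: (real^'n) measure)"
  by (simp add: borel_measurable_linear)

lemma borel_measurable_vec_to_wo_copy [measurable]: "vec_to_wo_copy \<in> borel_measurable borel"
  by (simp add: borel_measurable_linear linear_vec_to_wo_copy)

lemma borel_measurable_vec_of_wo_copy [measurable]: "vec_of_wo_copy \<in> borel_measurable borel"
  by (simp add: borel_measurable_linear linear_vec_of_wo_copy)

lemma norm_vec_to_wo_copy [simp]: "norm (vec_to_wo_copy x) = norm x"
proof -
  have "(\<Sum>j\<in>UNIV. (x $ Rep_wo_copy j)\<^sup>2) = (\<Sum>i\<in>UNIV. (x $ i)\<^sup>2)"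
    by (rule sum.reindex_bij_witness[of _ Abs_wo_copy Rep_wo_copy])
       (auto simp: Rep_wo_copy_inverse Abs_wo_copy_inverse)
  then show ?thesis by (simp add: norm_vec_def L2_set_def vec_to_wo_copy_def)
qed

lemma Basis_vec_eq_range_axis: "(Basis :: (real^'n) set) = range (\<lambda>i. axis i 1)"
  by (auto simp: Basis_vec_def)

lemma inj_axis_1: "inj (\<lambda>i. axis i (1::real))"
  by (auto simp: inj_on_def axis_eq_axis)

lemma prod_Basis_vec: "(\<Prod>b\<in>(Basis :: (real^'n) set). F b) = (\<Prod>i\<in>UNIV. F (axis i 1))"
  unfolding Basis_vec_eq_range_axis by (simp add: prod.reindex[OF inj_axis_1])

lemma sum_Basis_vec: "(\<Sum>b\<in>(Basis :: (real^'n) set). F b) = (\<Sum>i\<in>UNIV. F (axis i 1))"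
  unfolding Basis_vec_eq_range_axis by (simp add: sum.reindex[OF inj_axis_1])

lemma distr_lborel_vec_to_wo_copy:
  "distr lborel borel (vec_to_wo_copy :: real^'i::finite \<Rightarrow> _) = lborel"
proof (rule lborel_eqI[symmetric])
  fix l u :: "real^'i wo_copy"
  assume le: "\<And>b. b \<in> Basis \<Longrightarrow> l \<bullet> b \<le> u \<bullet> b"
  have box: "vec_to_wo_copy -` box l u = box (vec_of_wo_copy l) (vec_of_wo_copy u)"
    by (auto simp: mem_box_cart vec_to_wo_copy_def vec_of_wo_copy_def)
       (metis Abs_wo_copy_inverse Rep_wo_copy_inverse UNIV_I)+
  have le': "vec_of_wo_copy l $ i \<le> vec_of_wo_copy u $ i" for i
    using le[of "axis (Abs_wo_copy i) 1"] by (simp add: vec_of_wo_copy_def inner_axis)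
  have "(\<Prod>i\<in>UNIV. vec_of_wo_copy u $ i - vec_of_wo_copy l $ i) = (\<Prod>j\<in>UNIV. u $ j - l $ j)"
    unfolding vec_of_wo_copy_def vec_lambda_beta
    by (rule prod.reindex_bij_witness[of _ Rep_wo_copy Abs_wo_copy])
       (auto simp: Rep_wo_copy_inverse Abs_wo_copy_inverse)
  moreover have "emeasure lborel (box (vec_of_wo_copy l) (vec_of_wo_copy u))
      = (\<Prod>i\<in>UNIV. vec_of_wo_copy u $ i - vec_of_wo_copy l $ i)"
  proof -
    have "emeasure lborel (box (vec_of_wo_copy l) (vec_of_wo_copy u))
        = (\<Prod>b\<in>Basis. (vec_of_wo_copy u - vec_of_wo_copy l) \<bullet> b)"
      using le' by (subst emeasure_lborel_box_eq) (auto simp: Basis_vec_def inner_axis)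
    then show ?thesis by (simp add: prod_Basis_vec inner_axis)
  qed
  ultimately show "emeasure (distr lborel borel vec_to_wo_copy) (box l u) = (\<Prod>b\<in>Basis. (u - l) \<bullet> b)"
    by (simp add: emeasure_distr box prod_Basis_vec inner_axis)
qed simp

lemma distr_lborel_vec_of_wo_copy:
  "distr lborel borel (vec_of_wo_copy :: real^'i::finite wo_copy \<Rightarrow> _) = lborel"
proof -
  have "distr lborel borel (vec_of_wo_copy :: real^'i wo_copy \<Rightarrow> _)
      = distr (distr lborel borel vec_to_wo_copy) borel vec_of_wo_copy"
    by (simp add: distr_lborel_vec_to_wo_copy)
  also have "\<dots> = distr lborel borel (vec_of_wo_copy \<circ> vec_to_wo_copy)"
    by (subst distr_distr) auto
  also have "\<dots> = distr lborel lborel (\<lambda>x. x)" by (rule distr_cong) auto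
  finally show ?thesis by simp
qed

lemma lborel_distr_orthogonal_wellorder:
  fixes f :: "real^'n::{finite,wellorder} \<Rightarrow> real^'n::_"
  assumes f: "orthogonal_transformation f"
  shows "distr lborel borel f = lborel"
proof (rule lborel_eqI[symmetric])
  have lin: "linear f" using f orthogonal_transformation_linear by blast
  fix l u :: "real^'n::_"
  assume "\<And>b. b \<in> Basis \<Longrightarrow> l \<bullet> b \<le> u \<bullet> b"
  have g: "orthogonal_transformation (inv f)" using f orthogonal_transformation_inv by blast
  have bij: "bij f" using f orthogonal_transformation_bij by blast
  have box: "box l u \<in> lmeasurable" by simp
  have "emeasure (distr lborel borel f) (box l u) = emeasure lborel (f -` box l u)"
    using lin by (simp add: emeasure_distr borel_measurable_linear)
  also have "\<dots> = emeasure lebesgue (inv f ` box l u)"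
    using bij measurable_sets_borel[OF borel_measurable_linear[OF lin], of "box l u"]
    by (simp add: bij_vimage_eq_inv_image[symmetric] emeasure_completion)
  also have "\<dots> = emeasure lebesgue (box l u)"
    using measurable_orthogonal_image[OF g box] measure_orthogonal_image[OF g box] box
    by (simp add: emeasure_eq_measure2)
  finally show "emeasure (distr lborel borel f) (box l u) = (\<Prod>b\<in>Basis. (u - l) \<bullet> b)"
    using \<open>\<And>b. b \<in> Basis \<Longrightarrow> l \<bullet> b \<le> u \<bullet> b\<close> by (simp add: emeasure_lborel_box_eq)
qed simp

lemma lborel_distr_orthogonal:
  fixes f :: "real^'d::finite \<Rightarrow> real^'d"
  assumes f: "orthogonal_transformation f"
  shows "distr lborel borel f = lborel"
proof -
  define f' where "f' = vec_to_wo_copy \<circ> f \<circ> vec_of_wo_copy"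
  have lin: "linear f" using f orthogonal_transformation_linear by blast
  have [measurable]: "f \<in> borel_measurable borel" by (simp add: lin borel_measurable_linear)
  have "orthogonal_transformation f'"
    unfolding orthogonal_transformation f'_def
    using lin linear_vec_to_wo_copy linear_vec_of_wo_copy
    by (auto intro!: linear_compose simp: orthogonal_transformation_norm[OF f]
        simp flip: norm_vec_to_wo_copy[of "vec_of_wo_copy _"])
  then have f': "distr lborel borel f' = lborel" by (rule lborel_distr_orthogonal_wellorder)
  have "f = vec_of_wo_copy \<circ> f' \<circ> vec_to_wo_copy" by (simp add: f'_def fun_eq_iff)
  then have "distr lborel borel f
      = distr (distr (distr lborel borel vec_to_wo_copy) borel f') borel vec_of_wo_copy"
    by (simp add: distr_distr o_assoc f'_def)
  also have "\<dots> = lborel"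
    by (simp add: distr_lborel_vec_to_wo_copy f' distr_lborel_vec_of_wo_copy)
  finally show ?thesis .
qed

section \<open>Spectral theorem for symmetric operators\<close>

lemma rayleigh_second_order:
  fixes A :: "'a::euclidean_space \<Rightarrow> 'a"
  assumes lin: "linear A" and sym: "\<And>x y. A x \<bullet> y = x \<bullet> A y"
    and V: "subspace V" and x0: "x0 \<in> V" "norm x0 = 1"
    and max: "\<And>z. z \<in> V \<Longrightarrow> norm z = 1 \<Longrightarrow> z \<bullet> A z \<le> x0 \<bullet> A x0"
    and y: "y \<in> V" "x0 \<bullet> y = 0" and e: "0 < e"
  shows "2 * (x0 \<bullet> A y) \<le> e * ((x0 \<bullet> A x0) * (y \<bullet> y) - y \<bullet> A y)"
proof -
  define z where "z = x0 + e *\<^sub>R y"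
  have x0x0: "x0 \<bullet> x0 = 1" using x0(2) by (simp add: norm_eq_1)
  have zV: "z \<in> V" unfolding z_def using V x0 y by (auto intro!: subspace_add subspace_scale)
  have zz: "z \<bullet> z = 1 + e\<^sup>2 * (y \<bullet> y)"
    by (simp add: z_def inner_add_left inner_add_right x0x0 y(2) inner_commute power2_eq_square)
  then have "z \<bullet> z > 0" by (smt (verit) inner_ge_zero mult_nonneg_nonneg zero_le_power2)
  then have nz: "norm z > 0" by (simp add: inner_gt_zero_iff)
  have "(z /\<^sub>R norm z) \<bullet> A (z /\<^sub>R norm z) = (z \<bullet> A z) / (norm z)\<^sup>2"
    using lin by (simp add: linear_scale power2_eq_square divide_simps)
  with max[of "z /\<^sub>R norm z"] zV nz V have "(z \<bullet> A z) / (norm z)\<^sup>2 \<le> x0 \<bullet> A x0"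
    by (simp add: subspace_scale)
  then have "z \<bullet> A z \<le> (x0 \<bullet> A x0) * (z \<bullet> z)"
    using nz by (simp add: divide_le_eq power2_norm_eq_inner mult.commute)
  moreover have "z \<bullet> A z = x0 \<bullet> A x0 + 2 * e * (x0 \<bullet> A y) + e\<^sup>2 * (y \<bullet> A y)"
  proof -
    have "A z = A x0 + e *\<^sub>R A y" unfolding z_def using lin by (simp add: linear_add linear_scale)
    moreover have "y \<bullet> A x0 = x0 \<bullet> A y" using sym by (metis inner_commute)
    ultimately show ?thesis
      by (simp add: z_def inner_add_left inner_add_right power2_eq_square algebra_simps)
  qed
  ultimately have "e * (2 * (x0 \<bullet> A y)) \<le> e * (e * ((x0 \<bullet> A x0) * (y \<bullet> y) - y \<bullet> A y))"
    using zz by (simp add: algebra_simps power2_eq_square)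
  then show ?thesis using e by simp
qed

text \<open>A maximiser of the Rayleigh quotient is an eigenvector: otherwise moving it towards its
  residual \<open>y\<close> increases the quotient to first order.\<close>
lemma rayleigh_maximizer_eigenvector:
  fixes A :: "'a::euclidean_space \<Rightarrow> 'a"
  assumes lin: "linear A" and sym: "\<And>x y. A x \<bullet> y = x \<bullet> A y"
    and V: "subspace V" "A ` V \<subseteq> V" and x0: "x0 \<in> V" "norm x0 = 1"
    and max: "\<And>z. z \<in> V \<Longrightarrow> norm z = 1 \<Longrightarrow> z \<bullet> A z \<le> x0 \<bullet> A x0"
  shows "A x0 = (x0 \<bullet> A x0) *\<^sub>R x0"
proof -
  define y where "y = A x0 - (x0 \<bullet> A x0) *\<^sub>R x0"
  define C where "C = (x0 \<bullet> A x0) * (y \<bullet> y) - y \<bullet> A y"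
  have x0x0: "x0 \<bullet> x0 = 1" using x0(2) by (simp add: norm_eq_1)
  have y: "y \<in> V" "x0 \<bullet> y = 0"
    using V x0 by (auto simp: y_def inner_diff_right x0x0 intro!: subspace_diff subspace_scale)
  have "x0 \<bullet> A y = A x0 \<bullet> y" by (simp add: sym)
  also have "A x0 = y + (x0 \<bullet> A x0) *\<^sub>R x0" by (simp add: y_def)
  finally have "x0 \<bullet> A y = y \<bullet> y" using y(2) by (simp add: inner_add_right inner_commute)
  then have perturb: "2 * (y \<bullet> y) \<le> e * C" if "0 < e" for e
    using rayleigh_second_order[OF lin sym V(1) x0 max y that] by (simp add: C_def)
  have "y \<bullet> y = 0"
  proof (rule ccontr)
    assume "y \<bullet> y \<noteq> 0"
    then have yy: "y \<bullet> y > 0" by (simp add: order_le_neq_trans)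
    show False
    proof (cases "C \<le> 0")
      case True
      with perturb[of 1] yy show False by simp
    next
      case False
      with perturb[of "(y \<bullet> y) / C"] yy show False by simp
    qed
  qed
  then show ?thesis by (simp add: y_def)
qed

lemma invariant_orthogonal_complement:
  fixes A :: "'a::real_inner \<Rightarrow> 'a"
  assumes sym: "\<And>x y. A x \<bullet> y = x \<bullet> A y" and "A ` V \<subseteq> V" and "A x0 = c *\<^sub>R x0"
  shows "A ` {x \<in> V. x \<bullet> x0 = 0} \<subseteq> {x \<in> V. x \<bullet> x0 = 0}"
proof safe
  fix x assume "x \<in> V" "x \<bullet> x0 = 0"
  then show "A x \<in> V" and "A x \<bullet> x0 = 0" using assms(2,3) by (auto simp: sym[of x x0])
qed

lemma span_insert_orthogonal_complement:
  fixes x0 :: "'a::euclidean_space"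
  assumes V: "subspace V" and x0: "x0 \<in> V" "norm x0 = 1" and B: "{x \<in> V. x \<bullet> x0 = 0} \<subseteq> span B"
  shows "V \<subseteq> span (insert x0 B)"
proof
  fix z assume z: "z \<in> V"
  have "z - (z \<bullet> x0) *\<^sub>R x0 \<in> {x \<in> V. x \<bullet> x0 = 0}"
    using z x0 V by (auto simp: inner_diff_left norm_eq_1 intro!: subspace_diff subspace_scale)
  then have "z - (z \<bullet> x0) *\<^sub>R x0 \<in> span (insert x0 B)"
    using B span_mono[of B "insert x0 B"] by auto
  moreover have "(z \<bullet> x0) *\<^sub>R x0 \<in> span (insert x0 B)" by (simp add: span_base span_scale)
  ultimately have "(z - (z \<bullet> x0) *\<^sub>R x0) + (z \<bullet> x0) *\<^sub>R x0 \<in> span (insert x0 B)"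
    by (rule span_add)
  then show "z \<in> span (insert x0 B)" by simp
qed

lemma invariant_subspace_orthonormal_eigenbasis:
  fixes A :: "'a::euclidean_space \<Rightarrow> 'a"
  assumes lin: "linear A" and sym: "\<And>x y. A x \<bullet> y = x \<bullet> A y"
  shows "subspace V \<Longrightarrow> A ` V \<subseteq> V \<Longrightarrow> \<exists>B. B \<subseteq> V \<and> pairwise orthogonal B \<and>
           (\<forall>b\<in>B. norm b = 1 \<and> A b = (b \<bullet> A b) *\<^sub>R b) \<and> V \<subseteq> span B"
proof (induction "dim V" arbitrary: V rule: less_induct)
  case less
  show ?case
  proof (cases "V \<subseteq> {0}")
    case True
    then show ?thesis by (intro exI[of _ "{}"]) auto
  next
    case False
    then obtain v where v: "v \<in> V" "v \<noteq> 0" by auto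
    let ?S = "V \<inter> sphere 0 1"
    have "v /\<^sub>R norm v \<in> ?S" using v less.prems by (auto intro!: subspace_scale)
    moreover have "compact ?S"
      using closed_subspace[OF less.prems(1)] by (intro closed_Int_compact) auto
    moreover have "continuous_on ?S (\<lambda>x. x \<bullet> A x)"
      using lin by (intro continuous_intros linear_continuous_on linear_conv_bounded_linear[THEN iffD1])
    ultimately obtain x0 where x0: "x0 \<in> ?S" and max: "\<And>z. z \<in> ?S \<Longrightarrow> z \<bullet> A z \<le> x0 \<bullet> A x0"
      using continuous_attains_sup[of ?S "\<lambda>x. x \<bullet> A x"] by blast
    have eig: "A x0 = (x0 \<bullet> A x0) *\<^sub>R x0"
      using x0 max by (intro rayleigh_maximizer_eigenvector[OF lin sym less.prems]) auto
    define W where "W = {x \<in> V. x \<bullet> x0 = 0}"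
    have W: "subspace W"
      using less.prems(1) unfolding W_def subspace_def by (auto simp: inner_add_left)
    have x0W: "x0 \<notin> W" using x0 by (simp add: W_def norm_eq_1)
    then have "W \<subset> V" using x0 unfolding W_def by blast
    then have "dim W < dim V"
      using W less.prems(1) dim_psubset[of W V] by (simp add: span_eq_iff[THEN iffD2])
    moreover have "A ` W \<subseteq> W"
      unfolding W_def by (rule invariant_orthogonal_complement[OF sym less.prems(2) eig])
    ultimately obtain B where B: "B \<subseteq> W" "pairwise orthogonal B"
      "\<forall>b\<in>B. norm b = 1 \<and> A b = (b \<bullet> A b) *\<^sub>R b" "W \<subseteq> span B"
      using less.hyps[OF _ W] by blast
    show ?thesis
    proof (intro exI[of _ "insert x0 B"] conjI)
      show "insert x0 B \<subseteq> V" using B(1) x0 W_def by auto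
      show "pairwise orthogonal (insert x0 B)"
        using B(1,2) x0W unfolding pairwise_insert by (auto simp: W_def orthogonal_def inner_commute)
      show "\<forall>b\<in>insert x0 B. norm b = 1 \<and> A b = (b \<bullet> A b) *\<^sub>R b" using B(3) x0 eig by auto
      show "V \<subseteq> span (insert x0 B)"
        using less.prems(1) x0 B(4) unfolding W_def by (intro span_insert_orthogonal_complement) auto
    qed
  qed
qed

lemma orthonormal_spanning_expansion:
  fixes e :: "'i::finite \<Rightarrow> 'a::real_inner"
  assumes orth: "\<And>i j. e i \<bullet> e j = (if i = j then 1 else 0)" and span: "span (range e) = UNIV"
  shows "x = (\<Sum>i\<in>UNIV. (x \<bullet> e i) *\<^sub>R e i)"
proof -
  define r where "r = x - (\<Sum>i\<in>UNIV. (x \<bullet> e i) *\<^sub>R e i)"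
  have r_e: "r \<bullet> e j = 0" for j
    by (simp add: r_def inner_diff_left inner_sum_left orth if_distrib cong: if_cong)
  have "r \<bullet> z = 0" if "z \<in> span (range e)" for z
    using that
  proof (induction rule: span_induct)
    show "subspace {z. r \<bullet> z = 0}" by (auto simp: subspace_def inner_add_right)
  qed (use r_e in auto)
  then have "r \<bullet> r = 0" using span by blast
  then show ?thesis by (simp add: r_def)
qed

lemma symmetric_orthonormal_eigenbasis:
  fixes A :: "real^'n \<Rightarrow> real^'n"
  assumes lin: "linear A" and sym: "\<And>x y. A x \<bullet> y = x \<bullet> A y"
  obtains e :: "'n \<Rightarrow> real^'n" where "\<And>i j. e i \<bullet> e j = (if i = j then 1 else 0)"
    "\<And>i. A (e i) = (e i \<bullet> A (e i)) *\<^sub>R e i"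
    "\<And>x. x = (\<Sum>i\<in>UNIV. (x \<bullet> e i) *\<^sub>R e i)"
proof -
  obtain B where B: "pairwise orthogonal B" "\<forall>b\<in>B. norm b = 1 \<and> A b = (b \<bullet> A b) *\<^sub>R b"
    "UNIV \<subseteq> span B"
    using invariant_subspace_orthonormal_eigenbasis[OF lin sym, of UNIV] by auto
  have "independent B"
    using B(1,2) pairwise_orthogonal_independent by fastforce
  then have "card B = dim (span B)" by (simp add: dim_eq_card_independent)
  also have "span B = UNIV" using B(3) by auto
  finally have "card B = CARD('n)" by simp
  moreover have "finite B" using B(1) by (rule pairwise_orthogonal_imp_finite)
  ultimately obtain e where e: "bij_betw e (UNIV :: 'n set) B"
    using finite_same_card_bij[of "UNIV :: 'n set" B] by auto
  then have eB: "e i \<in> B" and rng: "range e = B" for i by (auto simp: bij_betw_def)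
  have orth: "e i \<bullet> e j = (if i = j then 1 else 0)" for i j
  proof (cases "i = j")
    case True then show ?thesis using B(2) eB[of i] by (simp add: norm_eq_1)
  next
    case False
    then have "e i \<noteq> e j" using e by (auto simp: bij_betw_def inj_on_def)
    then show ?thesis using B(1) eB[of i] eB[of j] False by (auto simp: pairwise_def orthogonal_def)
  qed
  have "span (range e) = UNIV" using B(3) rng by auto
  with orth have "x = (\<Sum>i\<in>UNIV. (x \<bullet> e i) *\<^sub>R e i)" for x
    by (rule orthonormal_spanning_expansion)
  then show ?thesis using that orth B(2) eB by blast
qed

section \<open>Positive definite matrices in an eigenbasis\<close>

locale pd_eigendecomposition =
  fixes L :: "real^'d^'d" and e :: "'d \<Rightarrow> real^'d" and l :: "'d \<Rightarrow> real"
  assumes orthonormal: "e i \<bullet> e j = (if i = j then 1 else 0)"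
    and expansion: "x = (\<Sum>i\<in>UNIV. (x \<bullet> e i) *\<^sub>R e i)"
    and eigenvector: "L *v e i = l i *\<^sub>R e i"
    and eigenvalue_pos: "0 < l i"

lemma pd_eigendecomposition_exists:
  fixes L :: "real^'d^'d"
  assumes sym: "\<And>x y. (L *v x) \<bullet> y = x \<bullet> (L *v y)"
    and lam: "0 < lam" and pd: "\<And>x. lam * (x \<bullet> x) \<le> x \<bullet> (L *v x)"
  obtains e l where "pd_eigendecomposition L e l"
proof -
  obtain e :: "'d \<Rightarrow> real^'d" where e: "\<And>i j. e i \<bullet> e j = (if i = j then 1 else 0)"
    "\<And>i. L *v e i = (e i \<bullet> (L *v e i)) *\<^sub>R e i" "\<And>x. x = (\<Sum>i\<in>UNIV. (x \<bullet> e i) *\<^sub>R e i)"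
    using symmetric_orthonormal_eigenbasis[of "(*v) L"] sym by auto
  have "0 < e i \<bullet> (L *v e i)" for i
    using pd[of "e i"] lam e(1)[of i i] by simp
  with e show ?thesis by (intro that[of e "\<lambda>i. e i \<bullet> (L *v e i)"] pd_eigendecomposition.intro) auto
qed

lemma matrix_inv_unique:
  fixes A B :: "'a::comm_semiring_1^'n^'n"
  assumes "A ** B = mat 1" "B ** A = mat 1"
  shows "matrix_inv A = B"
proof -
  have inv: "A ** matrix_inv A = mat 1 \<and> matrix_inv A ** A = mat 1"
    unfolding matrix_inv_def by (rule someI[of _ B]) (use assms in simp)
  then show ?thesis by (metis assms(1) matrix_mul_assoc matrix_mul_lid matrix_mul_rid)
qed

lemma det_eq_prod_orthonormal_eigenvalues:
  fixes L :: "real^'n^'n" and e :: "'n \<Rightarrow> real^'n"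
  assumes orthonormal: "\<And>i j. e i \<bullet> e j = (if i = j then 1 else 0)"
    and eigenvector: "\<And>i. L *v e i = l i *\<^sub>R e i"
  shows "det L = (\<Prod>i\<in>UNIV. l i)"
proof -
  define Q :: "real^'n^'n" where "Q = (\<chi> r c. e c $ r)"
  define D :: "real^'n^'n" where "D = (\<chi> r c. if r = c then l r else 0)"
  have "(L ** Q) $ r $ c = (Q ** D) $ r $ c" for r c
  proof -
    have "(L ** Q) $ r $ c = (L *v e c) $ r"
      by (simp add: matrix_matrix_mult_def matrix_vector_mult_def Q_def)
    also have "\<dots> = l c * e c $ r" by (simp add: eigenvector)
    also have "\<dots> = (Q ** D) $ r $ c"
      by (simp add: matrix_matrix_mult_def Q_def D_def if_distrib cong: if_cong)
    finally show ?thesis .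
  qed
  then have "L ** Q = Q ** D" by (simp add: vec_eq_iff)
  then have "det (L ** Q) = det (Q ** D)" by simp
  then have LQ: "det L * det Q = det D * det Q" by (simp add: det_mul mult.commute)
  have "(transpose Q ** Q) $ i $ j = e i \<bullet> e j" for i j
    by (simp add: matrix_matrix_mult_def transpose_def Q_def inner_vec_def)
  then have "transpose Q ** Q = mat 1" by (simp add: vec_eq_iff orthonormal mat_def)
  then have "det (transpose Q ** Q) = 1" by simp
  then have "det Q * det Q = 1" by (simp add: det_mul det_transpose)
  then have "det Q \<noteq> 0" by auto
  with LQ have "det L = det D" by simp
  also have "det D = (\<Prod>i\<in>UNIV. l i)" by (subst det_diagonal) (auto simp: D_def)
  finally show ?thesis .
qed

context pd_eigendecomposition
begin

lemma eigenvalue_nonzero [simp]: "l i \<noteq> 0"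
  using eigenvalue_pos[of i] by simp

lemma inner_sum_eigenbasis: "(\<Sum>i\<in>UNIV. c i *\<^sub>R e i) \<bullet> e j = c j"
  by (simp add: inner_sum_left orthonormal if_distrib cong: if_cong)

lemma eq_if_coords_eq: "(\<And>j. x \<bullet> e j = y \<bullet> e j) \<Longrightarrow> x = y"
  using expansion[of x] expansion[of y] by simp

lemma inner_eq_sum_coords: "x \<bullet> y = (\<Sum>i\<in>UNIV. (x \<bullet> e i) * (y \<bullet> e i))"
proof -
  have "x \<bullet> y = (\<Sum>i\<in>UNIV. (x \<bullet> e i) *\<^sub>R e i) \<bullet> y" using expansion[of x] by simp
  also have "\<dots> = (\<Sum>i\<in>UNIV. (x \<bullet> e i) * (e i \<bullet> y))" by (simp add: inner_sum_left)
  also have "\<dots> = (\<Sum>i\<in>UNIV. (x \<bullet> e i) * (y \<bullet> e i))" by (simp add: inner_commute)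
  finally show ?thesis .
qed

lemma mult_vec_eigenbasis: "L *v x = (\<Sum>i\<in>UNIV. (l i * (x \<bullet> e i)) *\<^sub>R e i)"
proof -
  have "L *v x = L *v (\<Sum>i\<in>UNIV. (x \<bullet> e i) *\<^sub>R e i)" using expansion[of x] by (rule arg_cong)
  then show ?thesis
    by (simp add: linear_sum[OF matrix_vector_mul_linear] matrix_vector_mult_scaleR eigenvector mult.commute)
qed

lemma inner_mult_vec_eigenvector: "(L *v x) \<bullet> e j = l j * (x \<bullet> e j)"
  by (simp add: mult_vec_eigenbasis inner_sum_eigenbasis)

lemma quadratic_form_eq: "x \<bullet> (L *v x) = (\<Sum>i\<in>UNIV. l i * (x \<bullet> e i)\<^sup>2)"
  by (simp add: inner_eq_sum_coords[of x "L *v x"] inner_mult_vec_eigenvector power2_eq_square mult_ac)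

lemma quadratic_form_nonneg: "0 \<le> x \<bullet> (L *v x)"
  by (simp add: quadratic_form_eq sum_nonneg eigenvalue_pos less_imp_le)

lemma matrix_inv_mult_vec: "matrix_inv L *v x = (\<Sum>i\<in>UNIV. (x \<bullet> e i / l i) *\<^sub>R e i)"
proof -
  define M where "M y = (\<Sum>i\<in>UNIV. (y \<bullet> e i / l i) *\<^sub>R e i)" for y
  have "linear M" unfolding linear_iff M_def
    by (simp add: inner_add_left add_divide_distrib scaleR_add_left sum.distrib scaleR_sum_right)
  then have M: "matrix M *v y = M y" for y by (simp add: matrix_works)
  have "L *v M y = y" "M (L *v y) = y" for y
    using eigenvalue_pos
    by (auto intro!: eq_if_coords_eq simp: inner_mult_vec_eigenvector M_def inner_sum_eigenbasis
        less_imp_neq[symmetric])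
  then have "L ** matrix M = mat 1" "matrix M ** L = mat 1"
    by (simp_all add: matrix_eq M flip: matrix_vector_mul_assoc)
  then have "matrix_inv L = matrix M" by (rule matrix_inv_unique)
  then show ?thesis by (simp add: M M_def)
qed

text \<open>In eigen-coordinates \<open>whiten p\<close> is \<open>L^(-1/2) p\<close>, and \<open>color z\<close> is \<open>L^(-1/2) z\<close> with \<open>z\<close> read
  in eigen-coordinates; \<open>color\<close> carries the standard Gaussian to \<^const>\<open>gauss_prec\<close> \<open>L\<close>.\<close>
definition whiten :: "real^'d \<Rightarrow> real^'d" where
  "whiten p = (\<chi> i. (p \<bullet> e i) / sqrt (l i))"

lemma wnorm_matrix_inv: "wnorm (matrix_inv L) p = norm (whiten p)"
proof -
  have "p \<bullet> (matrix_inv L *v p) = (\<Sum>i\<in>UNIV. (p \<bullet> e i)\<^sup>2 / l i)"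
    by (simp add: matrix_inv_mult_vec inner_sum_right power2_eq_square)
  also have "\<dots> = (\<Sum>i\<in>UNIV. (whiten p $ i)\<^sup>2)"
    by (simp add: whiten_def power_divide eigenvalue_pos less_imp_le)
  also have "\<dots> = whiten p \<bullet> whiten p" by (simp add: inner_vec_def power2_eq_square)
  finally show ?thesis by (simp add: wnorm_def norm_eq_sqrt_inner)
qed

definition color :: "real^'d \<Rightarrow> real^'d" where
  "color z = (\<Sum>i\<in>UNIV. (z $ i / sqrt (l i)) *\<^sub>R e i)"

lemma inner_color_eigenvector: "color z \<bullet> e j = z $ j / sqrt (l j)"
  by (simp add: color_def inner_sum_eigenbasis)

lemma inner_color: "p \<bullet> color z = whiten p \<bullet> z"
proof -
  have "p \<bullet> color z = (\<Sum>i\<in>UNIV. (p \<bullet> e i) * (color z \<bullet> e i))" by (rule inner_eq_sum_coords)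
  also have "\<dots> = (\<Sum>i\<in>UNIV. whiten p $ i * z $ i)"
    by (simp add: inner_color_eigenvector whiten_def)
  also have "\<dots> = whiten p \<bullet> z" by (simp add: inner_vec_def)
  finally show ?thesis .
qed

lemma quadratic_form_color: "color z \<bullet> (L *v color z) = (norm z)\<^sup>2"
proof -
  have "color z \<bullet> (L *v color z) = (\<Sum>i\<in>UNIV. z $ i * z $ i)"
    using eigenvalue_pos
    by (simp add: quadratic_form_eq inner_color_eigenvector power_divide less_imp_le power2_eq_square)
  then show ?thesis by (simp add: power2_norm_eq_inner inner_vec_def)
qed

lemma abs_inner_le_wnorm: "\<bar>p \<bullet> x\<bar> \<le> wnorm (matrix_inv L) p * sqrt (x \<bullet> (L *v x))"
proof -
  define b where "b = (\<chi> i. sqrt (l i) * (x \<bullet> e i))"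
  have "x = color b"
    using eigenvalue_pos by (intro eq_if_coords_eq) (simp add: inner_color_eigenvector b_def)
  then have "p \<bullet> x = whiten p \<bullet> b" and "sqrt (x \<bullet> (L *v x)) = norm b"
    by (simp_all add: inner_color quadratic_form_color)
  then show ?thesis by (simp add: wnorm_matrix_inv Cauchy_Schwarz_ineq2)
qed

lemma det_eq_prod_eigenvalues: "det L = (\<Prod>i\<in>UNIV. l i)"
  using orthonormal eigenvector by (rule det_eq_prod_orthonormal_eigenvalues)

end

section \<open>Gaussian and spherical integrals\<close>

lemma nn_integral_exp_neg_sq_half: "(\<integral>\<^sup>+ x. ennreal (exp (- x\<^sup>2 / 2)) \<partial>lborel) = ennreal (sqrt (2 * pi))"
proof -
  have "(\<integral>\<^sup>+ x. ennreal (exp (- x\<^sup>2 / 2)) \<partial>lborel)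
      = (\<integral>\<^sup>+ x. ennreal (sqrt (2 * pi)) * ennreal (std_normal_density x) \<partial>lborel)"
    by (intro nn_integral_cong) (simp add: std_normal_density_def ennreal_mult'[symmetric])
  also have "\<dots> = ennreal (sqrt (2 * pi)) * (\<integral>\<^sup>+ x. ennreal (std_normal_density x) \<partial>lborel)"
    by (rule nn_integral_cmult) simp
  also have "(\<integral>\<^sup>+ x. ennreal (std_normal_density x) \<partial>lborel) = 1"
    by (subst nn_integral_eq_integral) auto
  finally show ?thesis by simp
qed

lemma nn_integral_exp_neg_norm_sq_half:
  "(\<integral>\<^sup>+ z. ennreal (exp (- (norm (z::real^'d))\<^sup>2 / 2)) \<partial>lborel)
     = ennreal ((2 * pi) powr (real CARD('d) / 2))"
proof -
  have "exp (- (norm z)\<^sup>2 / 2) = (\<Prod>b\<in>Basis. exp (- (z \<bullet> b)\<^sup>2 / 2))" for z :: "real^'d"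
  proof -
    have "(norm z)\<^sup>2 = (\<Sum>b\<in>Basis. (z \<bullet> b)\<^sup>2)"
      unfolding power2_norm_eq_inner by (subst euclidean_inner) (simp add: power2_eq_square)
    then show ?thesis by (simp add: exp_sum[symmetric] sum_divide_distrib sum_negf)
  qed
  then have "(\<integral>\<^sup>+ z. ennreal (exp (- (norm (z::real^'d))\<^sup>2 / 2)) \<partial>lborel)
      = (\<integral>\<^sup>+ z. (\<Prod>b\<in>(Basis::(real^'d) set). ennreal (exp (- (z \<bullet> b)\<^sup>2 / 2))) \<partial>lborel)"
    by (simp add: prod_ennreal)
  also have "\<dots> = (\<Prod>b\<in>(Basis::(real^'d) set). (\<integral>\<^sup>+ x. ennreal (exp (- x\<^sup>2 / 2)) \<partial>lborel))"
    using nn_integral_lborel_prod[where f="\<lambda>b x. exp (- x\<^sup>2 / 2)" and 'a="real^'d"]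
    by (simp add: prod_ennreal)
  also have "\<dots> = ennreal (sqrt (2 * pi) ^ CARD('d))"
    using nn_integral_exp_neg_sq_half by (simp add: ennreal_power)
  also have "sqrt (2 * pi) ^ CARD('d) = (2 * pi) powr (real CARD('d) / 2)"
    by (simp add: powr_half_sqrt[symmetric] powr_realpow[symmetric] powr_powr)
  finally show ?thesis .
qed

lemma nn_integral_ball_scale_homogeneous:
  fixes g :: "real^'d \<Rightarrow> ennreal"
  assumes g[measurable]: "g \<in> borel_measurable borel"
    and hom: "\<And>r x. r > 0 \<Longrightarrow> g (r *\<^sub>R x) = g x" and r: "r > 0"
  shows "(\<integral>\<^sup>+ z. g z * indicator (ball 0 r) z \<partial>lborel)
       = ennreal (r ^ CARD('d)) * (\<integral>\<^sup>+ z. g z * indicator (ball 0 1) z \<partial>lborel)"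
proof -
  have [measurable]: "ball (0::real^'d) r \<in> sets borel" "ball (0::real^'d) 1 \<in> sets borel" by auto
  let ?F = "\<lambda>z. g z * indicator (ball (0::real^'d) r) z"
  have "(lborel :: (real^'d) measure)
      = density (distr lborel borel (\<lambda>x. 0 + r *\<^sub>R x)) (\<lambda>_. \<bar>r\<bar> ^ DIM(real^'d))"
    using lborel_affine[of r "0::real^'d"] r by simp
  from arg_cong[OF this, of "\<lambda>M. \<integral>\<^sup>+ z. ?F z \<partial>M"]
  have "(\<integral>\<^sup>+ z. ?F z \<partial>lborel) = (\<integral>\<^sup>+ z. ennreal (r ^ CARD('d)) * ?F (r *\<^sub>R z) \<partial>lborel)"
    using r by (simp add: nn_integral_density nn_integral_distr)
  also have "\<dots> = (\<integral>\<^sup>+ z. ennreal (r ^ CARD('d)) * (g z * indicator (ball 0 1) z) \<partial>lborel)"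
    using r hom by (intro nn_integral_cong) (simp add: indicator_def)
  also have "\<dots> = ennreal (r ^ CARD('d)) * (\<integral>\<^sup>+ z. g z * indicator (ball 0 1) z \<partial>lborel)"
    by (rule nn_integral_cmult) simp
  finally show ?thesis .
qed

lemma indicator_exp_neg_norm_sq_half_superlevel:
  fixes s :: real and z :: "real^'d"
  assumes "0 < s" "s < 1"
  shows "indicator {0<..<exp (- (norm z)\<^sup>2 / 2)} s = (indicator (ball 0 (sqrt (- 2 * ln s))) z :: ennreal)"
proof -
  have "s < exp (- (norm z)\<^sup>2 / 2) \<longleftrightarrow> (norm z)\<^sup>2 < - 2 * ln s"
    using assms(1) by (subst ln_less_cancel_iff[symmetric]) auto
  also have "\<dots> \<longleftrightarrow> norm z < sqrt (- 2 * ln s)"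
    by (metis norm_ge_zero real_less_rsqrt real_sqrt_less_iff real_sqrt_pow2_iff real_sqrt_power)
  finally show ?thesis using assms(1) by (simp add: indicator_def)
qed

lemma nn_integral_gauss_slice:
  fixes g :: "real^'d \<Rightarrow> ennreal"
  assumes g[measurable]: "g \<in> borel_measurable borel"
    and hom: "\<And>r x. r > 0 \<Longrightarrow> g (r *\<^sub>R x) = g x"
  shows "(\<integral>\<^sup>+ z. g z * indicator {0<..<exp (- (norm z)\<^sup>2 / 2)} s \<partial>lborel)
       = indicator {0<..<1} s * ennreal (sqrt (- 2 * ln s) ^ CARD('d))
         * (\<integral>\<^sup>+ z. g z * indicator (ball 0 1) z \<partial>lborel)"
proof (cases "0 < s \<and> s < 1")
  case True
  define R where "R = sqrt (- 2 * ln s)"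
  have "ln s < 0" using True by (simp add: ln_less_zero)
  then have R: "0 < R" unfolding R_def by (intro real_sqrt_gt_zero) linarith
  have "indicator {0<..<exp (- (norm z)\<^sup>2 / 2)} s = (indicator (ball 0 R) z :: ennreal)" for z :: "real^'d"
    unfolding R_def using True by (intro indicator_exp_neg_norm_sq_half_superlevel) auto
  then have "(\<integral>\<^sup>+ z. g z * indicator {0<..<exp (- (norm z)\<^sup>2 / 2)} s \<partial>lborel)
      = (\<integral>\<^sup>+ z. g z * indicator (ball 0 R) z \<partial>lborel)"
    by simp
  also have "\<dots> = ennreal (R ^ CARD('d)) * (\<integral>\<^sup>+ z. g z * indicator (ball 0 1) z \<partial>lborel)"
    by (rule nn_integral_ball_scale_homogeneous[OF g hom R])
  finally show ?thesis using True by (simp add: R_def)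
next
  case False
  have "s \<notin> {0<..<exp (- (norm z)\<^sup>2 / 2)}" for z :: "real^'d"
    using False order.strict_trans2[of s "exp (- (norm z)\<^sup>2 / 2)" 1] by auto
  then show ?thesis using False by simp
qed

text \<open>Layer cake: \<open>exp (- \<bar>z\<bar>\<^sup>2 / 2) = \<integral>\<^sub>0\<^sup>1 [s < exp (- \<bar>z\<bar>\<^sup>2 / 2)] ds\<close>, and the superlevel sets
  are balls, on which a ray-invariant integrand scales like the volume.\<close>
lemma nn_integral_exp_neg_norm_sq_half_homogeneous:
  fixes g :: "real^'d \<Rightarrow> ennreal"
  assumes g[measurable]: "g \<in> borel_measurable borel"
    and hom: "\<And>r x. r > 0 \<Longrightarrow> g (r *\<^sub>R x) = g x"
  shows "(\<integral>\<^sup>+ z. g z * ennreal (exp (- (norm z)\<^sup>2 / 2)) \<partial>lborel)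
       = (\<integral>\<^sup>+ s. indicator {0<..<1} s * ennreal (sqrt (- 2 * ln s) ^ CARD('d)) \<partial>lborel)
         * (\<integral>\<^sup>+ z. g z * indicator (ball 0 1) z \<partial>lborel)"
proof -
  define H where "H p = g (fst p) * indicator {0<..<exp (- (norm (fst p))\<^sup>2 / 2)} (snd p)"
    for p :: "(real^'d) \<times> real"
  have [measurable]: "H \<in> borel_measurable (lborel \<Otimes>\<^sub>M lborel)"
    unfolding H_def indicator_def greaterThanLessThan_iff by measurable
  have "(\<integral>\<^sup>+ z. g z * ennreal (exp (- (norm z)\<^sup>2 / 2)) \<partial>lborel)
      = (\<integral>\<^sup>+ z. (\<integral>\<^sup>+ s. H (z, s) \<partial>lborel) \<partial>lborel)"
    by (intro nn_integral_cong) (simp add: H_def nn_integral_cmult_indicator)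
  also have "\<dots> = (\<integral>\<^sup>+ s. (\<integral>\<^sup>+ z. H (z, s) \<partial>lborel) \<partial>lborel)"
  proof (rule pair_sigma_finite.Fubini[symmetric])
    show "pair_sigma_finite (lborel :: (real^'d) measure) (lborel :: real measure)"
      by (simp add: pair_sigma_finite_def lborel.sigma_finite_measure_axioms)
  qed measurable
  also have "\<dots> = (\<integral>\<^sup>+ s. indicator {0<..<1} s * ennreal (sqrt (- 2 * ln s) ^ CARD('d))
      * (\<integral>\<^sup>+ z. g z * indicator (ball 0 1) z \<partial>lborel) \<partial>lborel)"
    unfolding H_def fst_conv snd_conv using nn_integral_gauss_slice[OF g hom] by simp
  also have "\<dots> = (\<integral>\<^sup>+ s. indicator {0<..<1} s * ennreal (sqrt (- 2 * ln s) ^ CARD('d)) \<partial>lborel)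
      * (\<integral>\<^sup>+ z. g z * indicator (ball 0 1) z \<partial>lborel)"
    by (rule nn_integral_multc) simp
  finally show ?thesis .
qed

definition std_gauss_density :: "real^'d \<Rightarrow> real" where
  "std_gauss_density z = exp (- (norm z)\<^sup>2 / 2) / (2 * pi) powr (real CARD('d) / 2)"

lemma borel_measurable_std_gauss_density [measurable]: "std_gauss_density \<in> borel_measurable borel"
  unfolding std_gauss_density_def[abs_def] by measurable

lemma unit_ball_measure:
  shows emeasure_lborel_unit_ball:
      "emeasure lborel (ball (0::real^'d) 1) = ennreal (measure lborel (ball (0::real^'d) 1))"
    and measure_lborel_unit_ball_pos: "0 < measure lborel (ball (0::real^'d) 1)"
  using emeasure_lborel_ball_finite[of "0::real^'d" 1] content_ball_pos[of 1 "0::real^'d"]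
  by (auto simp: emeasure_eq_ennreal_measure less_top)

lemma nn_integral_sphere_unif:
  fixes g :: "real^'d \<Rightarrow> ennreal"
  assumes [measurable]: "g \<in> borel_measurable borel"
  shows "(\<integral>\<^sup>+ x. g x \<partial>sphere_unif)
       = (\<integral>\<^sup>+ z. g (sgn z) * indicator (ball 0 1) z \<partial>lborel) / emeasure lborel (ball (0::real^'d) 1)"
  unfolding sphere_unif_def by (simp add: nn_integral_distr nn_integral_uniform_measure)

lemma sgn_sgn_vector [simp]: "sgn (sgn x) = sgn (x :: 'a::real_normed_vector)"
  by (cases "x = 0") (simp_all add: sgn_div_norm)

lemma nn_integral_sphere_unif_sgn:
  fixes g :: "real^'d \<Rightarrow> ennreal"
  assumes [measurable]: "g \<in> borel_measurable borel"
  shows "(\<integral>\<^sup>+ x. g (sgn x) \<partial>sphere_unif) = (\<integral>\<^sup>+ x. g x \<partial>sphere_unif)"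
  by (simp add: nn_integral_sphere_unif)

lemma sets_sphere_unif [simp, measurable_cong]: "sets sphere_unif = sets borel"
  by (simp add: sphere_unif_def)

lemma prob_space_sphere_unif: "prob_space (sphere_unif :: (real^'d) measure)"
proof -
  have "prob_space (uniform_measure lborel (ball (0::real^'d) 1))"
    using emeasure_lborel_unit_ball[where 'd='d] measure_lborel_unit_ball_pos[where 'd='d]
    by (intro prob_space_uniform_measure) auto
  then show ?thesis unfolding sphere_unif_def by (rule prob_space.prob_space_distr) simp
qed

lemma homogeneous_sgn:
  assumes "\<And>r x. r > 0 \<Longrightarrow> g (r *\<^sub>R x) = g x"
  shows "g (sgn z) = g (z :: 'a::real_normed_vector)"
  using assms[of "inverse (norm z)" z] by (cases "z = 0") (simp_all add: sgn_div_norm divide_inverse_commute)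

text \<open>The direction of a standard Gaussian vector is uniformly distributed on the sphere.\<close>
lemma nn_integral_std_gauss_homogeneous:
  fixes g :: "real^'d \<Rightarrow> ennreal"
  assumes g[measurable]: "g \<in> borel_measurable borel"
    and hom: "\<And>r x. r > 0 \<Longrightarrow> g (r *\<^sub>R x) = g x"
  shows "(\<integral>\<^sup>+ z. g z * ennreal (std_gauss_density z) \<partial>lborel) = (\<integral>\<^sup>+ x. g x \<partial>sphere_unif)"
proof -
  define Phi where "Phi = (\<integral>\<^sup>+ s. indicator {0<..<1} s * ennreal (sqrt (- 2 * ln s) ^ CARD('d)) \<partial>lborel)"
  define vol where "vol = measure lborel (ball (0::real^'d) 1)"
  define c where "c = (2 * pi) powr (real CARD('d) / 2)"
  have vol: "emeasure lborel (ball (0::real^'d) 1) = ennreal vol" "0 < vol"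
    using unit_ball_measure[where 'd='d] by (simp_all add: vol_def)
  have c: "0 < c" by (simp add: c_def)
  have "ennreal c = (\<integral>\<^sup>+ z. (\<lambda>_. 1) z * ennreal (exp (- (norm (z::real^'d))\<^sup>2 / 2)) \<partial>lborel)"
    using nn_integral_exp_neg_norm_sq_half[where 'd='d] by (simp add: c_def)
  also have "\<dots> = Phi * (\<integral>\<^sup>+ z. (\<lambda>_. 1) z * indicator (ball (0::real^'d) 1) z \<partial>lborel)"
    unfolding Phi_def by (rule nn_integral_exp_neg_norm_sq_half_homogeneous) auto
  finally have "ennreal c = Phi * ennreal vol" using vol by simp
  then obtain phi where phi: "Phi = ennreal phi" "0 \<le> phi" "phi * vol = c"
    using vol c by (cases Phi) (auto simp: ennreal_mult'[symmetric])
  have "(\<integral>\<^sup>+ z. g z * ennreal (std_gauss_density z) \<partial>lborel)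
      = ennreal (1 / c) * (\<integral>\<^sup>+ z. g z * ennreal (exp (- (norm z)\<^sup>2 / 2)) \<partial>lborel)"
    by (subst nn_integral_cmult[symmetric])
       (auto intro!: nn_integral_cong simp: std_gauss_density_def c_def ennreal_mult'[symmetric] mult_ac)
  also have "\<dots> = ennreal (1 / c) * Phi * (\<integral>\<^sup>+ z. g z * indicator (ball 0 1) z \<partial>lborel)"
    using nn_integral_exp_neg_norm_sq_half_homogeneous[OF g hom] by (simp add: Phi_def mult.assoc)
  also have "ennreal (1 / c) * Phi = ennreal (1 / vol)"
    using phi vol(2) c by (simp add: ennreal_mult'[symmetric] field_simps)
  also have "ennreal (1 / vol) * (\<integral>\<^sup>+ z. g z * indicator (ball 0 1) z \<partial>lborel)
      = (\<integral>\<^sup>+ z. g (sgn z) * indicator (ball 0 1) z \<partial>lborel) / emeasure lborel (ball (0::real^'d) 1)"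
    using vol by (simp add: homogeneous_sgn[OF hom] divide_ennreal_def inverse_ennreal mult.commute inverse_eq_divide)
  finally show ?thesis by (simp add: nn_integral_sphere_unif)
qed

lemma nn_integral_sphere_unif_orthogonal:
  fixes g :: "real^'d \<Rightarrow> ennreal" and f :: "real^'d \<Rightarrow> real^'d"
  assumes f: "orthogonal_transformation f" and [measurable]: "g \<in> borel_measurable borel"
  shows "(\<integral>\<^sup>+ x. g (f x) \<partial>sphere_unif) = (\<integral>\<^sup>+ x. g x \<partial>sphere_unif)"
proof -
  have lin: "linear f" using f by (simp add: orthogonal_transformation)
  have [measurable]: "f \<in> borel_measurable borel" using lin by (rule borel_measurable_linear)
  have norm_f: "norm (f z) = norm z" for z using f by (simp add: orthogonal_transformation)
  have [measurable]: "ball (0::real^'d) 1 \<in> sets borel" by simp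
  have "(\<integral>\<^sup>+ z. g (sgn z) * indicator (ball 0 1) z \<partial>lborel)
      = (\<integral>\<^sup>+ z. g (sgn z) * indicator (ball 0 1) z \<partial>distr lborel borel f)"
    by (simp add: lborel_distr_orthogonal[OF f])
  also have "\<dots> = (\<integral>\<^sup>+ z. g (sgn (f z)) * indicator (ball 0 1) (f z) \<partial>lborel)"
    by (subst nn_integral_distr) auto
  also have "\<dots> = (\<integral>\<^sup>+ z. g (f (sgn z)) * indicator (ball 0 1) z \<partial>lborel)"
    using lin by (simp add: sgn_div_norm norm_f linear_scale indicator_def)
  finally show ?thesis by (simp add: nn_integral_sphere_unif)
qed

lemma integral_sphere_abs_inner_eq:
  fixes u v :: "real^'d"
  assumes "norm u = 1" "norm v = 1"
  shows "(\<integral>x. \<bar>x \<bullet> u\<bar> \<partial>sphere_unif) = (\<integral>x. \<bar>x \<bullet> v\<bar> \<partial>sphere_unif)"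
proof -
  obtain f where f: "orthogonal_transformation f" "f v = u"
    using orthogonal_transformation_exists_1[OF assms(2,1)] by blast
  have "(\<integral>\<^sup>+ x. ennreal \<bar>x \<bullet> u\<bar> \<partial>sphere_unif) = (\<integral>\<^sup>+ x. ennreal \<bar>f x \<bullet> u\<bar> \<partial>sphere_unif)"
    by (rule nn_integral_sphere_unif_orthogonal[OF f(1), symmetric]) simp
  also have "\<dots> = (\<integral>\<^sup>+ x. ennreal \<bar>x \<bullet> v\<bar> \<partial>sphere_unif)"
    using f by (simp add: orthogonal_transformation_def flip: f(2))
  finally show ?thesis by (subst (1 2) integral_eq_nn_integral) auto
qed

lemma integral_sphere_abs_inner_sgn_le:
  fixes m u :: "real^'d"
  assumes "norm u = 1"
  shows "(\<integral>x. \<bar>x \<bullet> sgn m\<bar> \<partial>sphere_unif) \<le> (\<integral>x. \<bar>x \<bullet> u\<bar> \<partial>sphere_unif)"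
proof (cases "m = 0")
  case True
  then show ?thesis by (simp add: integral_nonneg_AE)
next
  case False
  then show ?thesis using integral_sphere_abs_inner_eq[of "sgn m" u] assms by (simp add: norm_sgn)
qed

lemma nn_integral_lborel_scale_coordinates:
  fixes g :: "real^'d \<Rightarrow> ennreal" and c :: "'d \<Rightarrow> real"
  assumes c: "\<And>i. c i \<noteq> 0" and [measurable]: "g \<in> borel_measurable borel"
  shows "(\<integral>\<^sup>+ x. g x \<partial>lborel) = ennreal (\<Prod>i\<in>UNIV. \<bar>c i\<bar>) * (\<integral>\<^sup>+ z. g (\<chi> i. c i * z $ i) \<partial>lborel)"
proof -
  define c' where "c' b = (\<chi> i. c i) \<bullet> b" for b :: "real^'d"
  have c'_axis: "c' (axis i 1) = c i" for i by (simp add: c'_def inner_axis)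
  have scale: "(\<Sum>j\<in>Basis. (c' j * (z \<bullet> j)) *\<^sub>R j) = (\<chi> i. c i * z $ i)" for z :: "real^'d"
    using basis_expansion[of "\<chi> i. c i * z $ i"]
    by (simp add: sum_Basis_vec c'_axis inner_axis scalar_mult_eq_scaleR)
  have [measurable]: "(\<lambda>z::real^'d. \<chi> i. c i * z $ i) \<in> borel_measurable borel"
    by (rule borel_measurable_linear) (auto simp: linear_iff vec_eq_iff algebra_simps)
  have "c' b \<noteq> 0" if "b \<in> Basis" for b
    using that c by (auto simp: Basis_vec_def c'_axis)
  from lborel_affine_euclidean[where c=c' and t=0, OF this]
  have "(\<integral>\<^sup>+ x. g x \<partial>lborel) = (\<integral>\<^sup>+ x. g x \<partial>density (distr lborel borel
      (\<lambda>x. 0 + (\<Sum>j\<in>Basis. (c' j * (x \<bullet> j)) *\<^sub>R j))) (\<lambda>_. \<Prod>j\<in>Basis. \<bar>c' j\<bar>))"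
    by simp
  also have "\<dots> = (\<integral>\<^sup>+ z. ennreal (\<Prod>j\<in>Basis. \<bar>c' j\<bar>) * g (\<Sum>j\<in>Basis. (c' j * (z \<bullet> j)) *\<^sub>R j) \<partial>lborel)"
    by (simp add: nn_integral_density nn_integral_distr)
  also have "\<dots> = (\<integral>\<^sup>+ z. ennreal (\<Prod>j\<in>Basis. \<bar>c' j\<bar>) * g (\<chi> i. c i * z $ i) \<partial>lborel)"
    by (simp only: scale)
  also have "(\<Prod>j\<in>Basis. \<bar>c' j\<bar>) = (\<Prod>i\<in>UNIV. \<bar>c i\<bar>)"
    by (simp add: prod_Basis_vec c'_axis)
  finally show ?thesis by (simp add: nn_integral_cmult)
qed

section \<open>The Gaussian with precision matrix \<open>L\<close>\<close>

lemma real_sqrt_prod: "sqrt (prod f A) = (\<Prod>i\<in>A. sqrt (f i))"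
  by (induction A rule: infinite_finite_induct) (auto simp: real_sqrt_mult)

context pd_eigendecomposition
begin

lemma orthogonal_transformation_eigenbasis: "orthogonal_transformation (\<lambda>y. \<Sum>i\<in>UNIV. y $ i *\<^sub>R e i)"
proof -
  have "norm (\<Sum>i\<in>UNIV. y $ i *\<^sub>R e i) = norm y" for y
  proof -
    have "(\<Sum>i\<in>UNIV. y $ i *\<^sub>R e i) \<bullet> (\<Sum>i\<in>UNIV. y $ i *\<^sub>R e i) = (\<Sum>i\<in>UNIV. y $ i * y $ i)"
      by (subst inner_eq_sum_coords) (simp add: inner_sum_eigenbasis)
    then show ?thesis by (simp add: norm_eq_sqrt_inner inner_vec_def)
  qed
  moreover have "linear (\<lambda>y. \<Sum>i\<in>UNIV. y $ i *\<^sub>R e i)"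
    by (simp add: linear_iff scaleR_add_left sum.distrib scaleR_sum_right)
  ultimately show ?thesis by (simp add: orthogonal_transformation)
qed

lemma color_eq_eigenbasis: "color z = (\<Sum>i\<in>UNIV. (\<chi> i. 1 / sqrt (l i) * z $ i) $ i *\<^sub>R e i)"
  by (simp add: color_def)

lemma borel_measurable_color [measurable]: "color \<in> borel_measurable borel"
  unfolding color_def[abs_def]
  by (rule borel_measurable_linear)
     (simp add: linear_iff add_divide_distrib scaleR_add_left sum.distrib scaleR_sum_right)

lemma gauss_prec_density_color:
  "(\<Prod>i\<in>UNIV. \<bar>1 / sqrt (l i)\<bar>)
     * (sqrt (det L) / (2 * pi) powr (real CARD('d) / 2) * exp (- (color z \<bullet> (L *v color z)) / 2))
   = std_gauss_density z"
proof -
  have "(\<Prod>i\<in>UNIV. \<bar>1 / sqrt (l i)\<bar>) * sqrt (det L) = 1"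
    by (simp add: det_eq_prod_eigenvalues real_sqrt_prod prod_dividef eigenvalue_pos less_imp_le)
  then show ?thesis by (simp add: std_gauss_density_def quadratic_form_color)
qed

lemma nn_integral_gauss_prec:
  fixes h :: "real^'d \<Rightarrow> ennreal"
  assumes [measurable]: "h \<in> borel_measurable borel"
  shows "(\<integral>\<^sup>+ \<theta>. h \<theta> \<partial>gauss_prec L) = (\<integral>\<^sup>+ z. h (color z) * ennreal (std_gauss_density z) \<partial>lborel)"
proof -
  define f where "f y = (\<Sum>i\<in>UNIV. y $ i *\<^sub>R e i)" for y :: "real^'d"
  define dens where "dens \<theta> = sqrt (det L) / (2 * pi) powr (real CARD('d) / 2) * exp (- (\<theta> \<bullet> (L *v \<theta>)) / 2)"
    for \<theta> :: "real^'d"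
  have f: "orthogonal_transformation f"
    unfolding f_def by (rule orthogonal_transformation_eigenbasis)
  have [measurable]: "f \<in> borel_measurable borel"
    using f by (simp add: orthogonal_transformation borel_measurable_linear)
  have [measurable]: "dens \<in> borel_measurable borel" unfolding dens_def[abs_def] by measurable
  have "(\<integral>\<^sup>+ \<theta>. h \<theta> \<partial>gauss_prec L) = (\<integral>\<^sup>+ \<theta>. ennreal (dens \<theta>) * h \<theta> \<partial>lborel)"
    unfolding gauss_prec_def dens_def by (subst nn_integral_density) auto
  also have "\<dots> = (\<integral>\<^sup>+ y. ennreal (dens (f y)) * h (f y) \<partial>lborel)"
    by (subst lborel_distr_orthogonal[OF f, symmetric]) (simp add: nn_integral_distr)
  also have "\<dots> = ennreal (\<Prod>i\<in>UNIV. \<bar>1 / sqrt (l i)\<bar>)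
      * (\<integral>\<^sup>+ z. ennreal (dens (color z)) * h (color z) \<partial>lborel)"
    by (subst nn_integral_lborel_scale_coordinates[of "\<lambda>i. 1 / sqrt (l i)"])
       (simp_all add: f_def color_eq_eigenbasis)
  also have "\<dots> = (\<integral>\<^sup>+ z. ennreal (\<Prod>i\<in>UNIV. \<bar>1 / sqrt (l i)\<bar>) * (ennreal (dens (color z)) * h (color z)) \<partial>lborel)"
    by (rule nn_integral_cmult[symmetric]) measurable
  also have "\<dots> = (\<integral>\<^sup>+ z. h (color z) * ennreal (std_gauss_density z) \<partial>lborel)"
  proof (intro nn_integral_cong)
    fix z
    have "ennreal (\<Prod>i\<in>UNIV. \<bar>1 / sqrt (l i)\<bar>) * ennreal (dens (color z)) = ennreal (std_gauss_density z)"
      using gauss_prec_density_color[of z] by (simp add: dens_def ennreal_mult'[symmetric] prod_nonneg)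
    then show "ennreal (\<Prod>i\<in>UNIV. \<bar>1 / sqrt (l i)\<bar>) * (ennreal (dens (color z)) * h (color z))
        = h (color z) * ennreal (std_gauss_density z)"
      by (metis mult.assoc mult.commute)
  qed
  finally show ?thesis .
qed

lemma prob_space_gauss_prec: "prob_space (gauss_prec L)"
proof
  have "emeasure (gauss_prec L) (space (gauss_prec L)) = (\<integral>\<^sup>+ \<theta>. 1 \<partial>gauss_prec L)"
    by simp
  also have "\<dots> = (\<integral>\<^sup>+ z. 1 * ennreal (std_gauss_density (z :: real^'d)) \<partial>lborel)"
    using nn_integral_gauss_prec[of "\<lambda>_. 1"] by simp
  also have "\<dots> = (\<integral>\<^sup>+ x. 1 \<partial>(sphere_unif :: (real^'d) measure))"
    by (rule nn_integral_std_gauss_homogeneous) auto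
  also have "\<dots> = 1"
    using prob_space.emeasure_space_1[OF prob_space_sphere_unif] by simp
  finally show "emeasure (gauss_prec L) (space (gauss_prec L)) = 1" .
qed

lemma nn_integral_gauss_prec_abs_inner_ratio:
  "(\<integral>\<^sup>+ \<theta>. ennreal (\<bar>p \<bullet> \<theta>\<bar> / sqrt (\<theta> \<bullet> (L *v \<theta>))) \<partial>gauss_prec L)
     = ennreal (norm (whiten p)) * (\<integral>\<^sup>+ x. ennreal \<bar>x \<bullet> sgn (whiten p)\<bar> \<partial>sphere_unif)"
proof -
  define w where "w = whiten p"
  define g where "g x = ennreal \<bar>sgn x \<bullet> sgn w\<bar>" for x :: "real^'d"
  have [measurable]: "g \<in> borel_measurable borel" unfolding g_def[abs_def] by measurable
  have hom: "g (r *\<^sub>R x) = g x" if "r > 0" for r x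
    using that by (simp add: g_def sgn_scaleR)
  have ratio: "\<bar>p \<bullet> color z\<bar> / sqrt (color z \<bullet> (L *v color z)) = norm w * \<bar>sgn z \<bullet> sgn w\<bar>" for z
    by (cases "z = 0 \<or> w = 0")
       (auto simp: inner_color quadratic_form_color w_def sgn_div_norm abs_mult field_simps inner_commute)
  have "(\<integral>\<^sup>+ \<theta>. ennreal (\<bar>p \<bullet> \<theta>\<bar> / sqrt (\<theta> \<bullet> (L *v \<theta>))) \<partial>gauss_prec L)
      = (\<integral>\<^sup>+ z. ennreal (norm w) * (g z * ennreal (std_gauss_density z)) \<partial>lborel)"
    by (subst nn_integral_gauss_prec)
       (auto intro!: nn_integral_cong simp: ratio g_def ennreal_mult mult.assoc)
  also have "\<dots> = ennreal (norm w) * (\<integral>\<^sup>+ x. g x \<partial>sphere_unif)"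
    by (simp add: nn_integral_cmult nn_integral_std_gauss_homogeneous hom)
  also have "(\<integral>\<^sup>+ x. g x \<partial>sphere_unif) = (\<integral>\<^sup>+ x. ennreal \<bar>x \<bullet> sgn w\<bar> \<partial>sphere_unif)"
    unfolding g_def by (rule nn_integral_sphere_unif_sgn) simp
  finally show ?thesis by (simp add: w_def)
qed

lemma integral_gauss_prec_abs_inner_ratio:
  "(\<integral>\<theta>. \<bar>p \<bullet> \<theta>\<bar> / sqrt (\<theta> \<bullet> (L *v \<theta>)) \<partial>gauss_prec L)
     = wnorm (matrix_inv L) p * (\<integral>x. \<bar>x \<bullet> sgn (whiten p)\<bar> \<partial>sphere_unif)"
proof -
  have "(\<integral>\<theta>. \<bar>p \<bullet> \<theta>\<bar> / sqrt (\<theta> \<bullet> (L *v \<theta>)) \<partial>gauss_prec L)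
      = enn2real (\<integral>\<^sup>+ \<theta>. ennreal (\<bar>p \<bullet> \<theta>\<bar> / sqrt (\<theta> \<bullet> (L *v \<theta>))) \<partial>gauss_prec L)"
    by (rule integral_eq_nn_integral) (auto intro!: AE_I2 simp: gauss_prec_def quadratic_form_nonneg)
  also have "\<dots> = norm (whiten p) * enn2real (\<integral>\<^sup>+ x. ennreal \<bar>x \<bullet> sgn (whiten p)\<bar> \<partial>sphere_unif)"
    by (simp add: nn_integral_gauss_prec_abs_inner_ratio enn2real_mult)
  also have "enn2real (\<integral>\<^sup>+ x. ennreal \<bar>x \<bullet> sgn (whiten p)\<bar> \<partial>sphere_unif)
      = (\<integral>x. \<bar>x \<bullet> sgn (whiten p)\<bar> \<partial>sphere_unif)"
    by (rule integral_eq_nn_integral[symmetric]) auto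
  finally show ?thesis by (simp add: wnorm_matrix_inv)
qed

end

section \<open>The logistic bandit quantities\<close>

lemma mudot_eq: "mudot x = exp (- x) / (1 + exp (- x))\<^sup>2"
proof -
  have "1 + exp (- x) \<noteq> 0" by (smt (verit) exp_gt_zero)
  then have "(mu has_real_derivative exp (- x) / (1 + exp (- x))\<^sup>2) (at x)"
    unfolding mu_def[abs_def]
    by (auto intro!: derivative_eq_intros simp: power2_eq_square)
  then show ?thesis unfolding mudot_def by (rule DERIV_imp_deriv)
qed

lemma mudot_nonneg: "0 \<le> mudot x"
  by (simp add: mudot_eq)

lemma sum_matrix_vector_mult: "(\<Sum>i\<in>A. B i) *v (x::real^'n) = (\<Sum>i\<in>A. B i *v x)"
  by (induction A rule: infinite_finite_induct) (auto simp: matrix_vector_mult_add_rdistrib)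

lemma outer_mult_vec: "outer f *v x = (f \<bullet> x) *\<^sub>R (f::real^'n)"
  by (simp add: vec_eq_iff matrix_vector_mult_def outer_def inner_vec_def sum_distrib_left mult_ac)

lemma Lmat_mult_vec: "Lmat lam fs thp t *v x
   = lam *\<^sub>R x + (\<Sum>i\<in>{1..<t}. (mudot (fs i \<bullet> thp i) * (fs i \<bullet> x)) *\<^sub>R fs i)"
  unfolding Lmat_def
  by (simp add: matrix_vector_mult_add_rdistrib sum_matrix_vector_mult outer_mult_vec
      flip: scaleR_matrix_vector_assoc)

lemma Lmat_symmetric: "(Lmat lam fs thp t *v x) \<bullet> y = x \<bullet> (Lmat lam fs thp t *v y)"
  by (simp add: Lmat_mult_vec inner_add_left inner_add_right inner_sum_left inner_sum_right
      inner_commute mult_ac)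

lemma Lmat_ge_regularizer: "lam * (x \<bullet> x) \<le> x \<bullet> (Lmat lam fs thp t *v x)"
proof -
  have "x \<bullet> (Lmat lam fs thp t *v x)
      = lam * (x \<bullet> x) + (\<Sum>i\<in>{1..<t}. mudot (fs i \<bullet> thp i) * (fs i \<bullet> x)\<^sup>2)"
    by (simp add: Lmat_mult_vec inner_add_right inner_sum_right power2_eq_square inner_commute mult_ac)
  moreover have "0 \<le> (\<Sum>i\<in>{1..<t}. mudot (fs i \<bullet> thp i) * (fs i \<bullet> x)\<^sup>2)"
    by (intro sum_nonneg mult_nonneg_nonneg mudot_nonneg) simp
  ultimately show ?thesis by simp
qed

lemma Lmat_pd_eigendecomposition:
  assumes "0 < lam"
  obtains e l where "pd_eigendecomposition (Lmat lam fs thp t) e l"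
  using pd_eigendecomposition_exists[OF Lmat_symmetric assms Lmat_ge_regularizer] by blast

lemma (in prob_space) integrable_finite_selection:
  assumes sel: "sel \<in> measurable M (count_space UNIV)" and A: "finite A" "\<And>x. sel x \<in> A"
  shows "integrable M (\<lambda>x. F (sel x) :: real)"
proof (rule integrable_const_bound)
  show "AE x in M. norm (F (sel x)) \<le> (\<Sum>a\<in>A. \<bar>F a\<bar>)"
    using A by (auto intro!: member_le_sum)
  show "(\<lambda>x. F (sel x)) \<in> borel_measurable M"
    using measurable_compose[OF sel, of F borel] by simp
qed

context pd_eigendecomposition
begin

lemma wnorm_matrix_inv_nonneg: "0 \<le> wnorm (matrix_inv L) p"
  by (simp add: wnorm_matrix_inv)

lemma abs_inner_ratio_le:
  assumes "c * \<bar>p \<bullet> \<theta>\<bar> \<le> d * \<bar>q \<bullet> \<theta>\<bar>" and "0 \<le> d"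
  shows "c * (\<bar>p \<bullet> \<theta>\<bar> / sqrt (\<theta> \<bullet> (L *v \<theta>))) \<le> d * wnorm (matrix_inv L) q"
proof (cases "sqrt (\<theta> \<bullet> (L *v \<theta>)) = 0")
  case True
  then show ?thesis using assms(2) wnorm_matrix_inv_nonneg by simp
next
  case False
  then have pos: "0 < sqrt (\<theta> \<bullet> (L *v \<theta>))"
    using quadratic_form_nonneg[of \<theta>] by simp
  have "c * \<bar>p \<bullet> \<theta>\<bar> \<le> d * (wnorm (matrix_inv L) q * sqrt (\<theta> \<bullet> (L *v \<theta>)))"
    using assms abs_inner_le_wnorm[of q \<theta>] by (meson mult_left_mono order_trans)
  then show ?thesis using pos by (simp add: divide_le_eq mult.assoc)
qed

lemma integral_gauss_prec_lower_bound:
  assumes F: "integrable (gauss_prec L) F" and c: "0 \<le> c"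
    and le: "\<And>\<theta>. c * (\<bar>p \<bullet> \<theta>\<bar> / sqrt (\<theta> \<bullet> (L *v \<theta>))) \<le> F \<theta>"
  shows "c * (wnorm (matrix_inv L) p * (\<integral>x. \<bar>x \<bullet> sgn (whiten p)\<bar> \<partial>sphere_unif))
       \<le> (\<integral>\<theta>. F \<theta> \<partial>gauss_prec L)"
proof -
  interpret G: prob_space "gauss_prec L" by (rule prob_space_gauss_prec)
  define r where "r \<theta> = \<bar>p \<bullet> \<theta>\<bar> / sqrt (\<theta> \<bullet> (L *v \<theta>))" for \<theta>
  have "integrable (gauss_prec L) r"
  proof (rule G.integrable_const_bound)
    show "AE \<theta> in gauss_prec L. norm (r \<theta>) \<le> wnorm (matrix_inv L) p"
      using abs_inner_ratio_le[of 1 p _ 1 p] by (simp add: r_def quadratic_form_nonneg)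
  qed (simp add: gauss_prec_def r_def[abs_def])
  then have "(\<integral>\<theta>. c * r \<theta> \<partial>gauss_prec L) \<le> (\<integral>\<theta>. F \<theta> \<partial>gauss_prec L)"
    using le unfolding r_def[symmetric] by (intro integral_mono[OF integrable_mult_right F])
  moreover have "(\<integral>\<theta>. c * r \<theta> \<partial>gauss_prec L) = c * (\<integral>\<theta>. r \<theta> \<partial>gauss_prec L)" by simp
  ultimately show ?thesis unfolding r_def integral_gauss_prec_abs_inner_ratio by simp
qed

lemma integral_selected_uncertainty_ge:
  assumes sel: "sel \<in> borel \<rightarrow>\<^sub>M count_space UNIV" and A: "finite A" "a \<in> A"
    and greedy: "\<And>\<theta>. sel \<theta> \<in> A \<and> (\<forall>b\<in>A. mudot (phi s b \<bullet> \<theta>b) * \<bar>phi s b \<bullet> \<theta>\<bar>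
                    \<le> mudot (phi s (sel \<theta>) \<bullet> \<theta>b) * \<bar>phi s (sel \<theta>) \<bullet> \<theta>\<bar>)"
  shows "mudot (phi s a \<bullet> \<theta>b)
           * (wnorm (matrix_inv L) (phi s a) * (\<integral>x. \<bar>x \<bullet> sgn (whiten (phi s a))\<bar> \<partial>sphere_unif))
         \<le> (\<integral>\<theta>. U phi s (sel \<theta>) \<theta>b L \<partial>gauss_prec L)"
proof (rule integral_gauss_prec_lower_bound)
  interpret G: prob_space "gauss_prec L" by (rule prob_space_gauss_prec)
  show "integrable (gauss_prec L) (\<lambda>\<theta>. U phi s (sel \<theta>) \<theta>b L)"
    using sel A(1) greedy by (intro G.integrable_finite_selection[of _ A]) (auto simp: gauss_prec_def)
  show "mudot (phi s a \<bullet> \<theta>b) * (\<bar>phi s a \<bullet> \<theta>\<bar> / sqrt (\<theta> \<bullet> (L *v \<theta>))) \<le> U phi s (sel \<theta>) \<theta>b L" for \<theta>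
    unfolding U_def using greedy[of \<theta>] A(2) by (intro abs_inner_ratio_le mudot_nonneg) auto
qed (rule mudot_nonneg)

text \<open>Whatever \<^const>\<open>inv_sqrt\<close> is, only the direction of \<open>inv_sqrt L *v p\<close> enters \<^const>\<open>Iint\<close>,
  and the spherical integral does not depend on it (or vanishes).\<close>
lemma wnorm_mult_Iint_le:
  "wnorm (matrix_inv L) (phi s a) * Iint phi s a L
     \<le> wnorm (matrix_inv L) (phi s a) * (\<integral>x. \<bar>x \<bullet> sgn (whiten (phi s a))\<bar> \<partial>sphere_unif)"
  unfolding Iint_def
  by (cases "whiten (phi s a) = 0")
     (simp_all add: wnorm_matrix_inv integral_sphere_abs_inner_sgn_le norm_sgn)

end

theorem mainTheorem8:
  fixes \<delta> lam S :: real and t :: nat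
    and beta :: "nat \<Rightarrow> real \<Rightarrow> real"
    and Act :: "'s \<Rightarrow> 'a set"
    and phi :: "'s \<Rightarrow> 'a \<Rightarrow> real^'d"
    and hs :: "nat \<Rightarrow> 's" and ha :: "nat \<Rightarrow> 'a" and hx :: "nat \<Rightarrow> real"
    and thbar thp :: "nat \<Rightarrow> real^'d"
    and s :: 's and sel :: "real^'d \<Rightarrow> 'a" and amu :: 'a
  defines "fs \<equiv> (\<lambda>i. phi (hs i) (ha i))"
  defines "Lt \<equiv> Lmat lam fs thp t"
  assumes "0 \<le> \<delta>" and "\<delta> < 1" and "1 \<le> t"
    and "0 < lam" and "0 < S"
    and "\<forall>s'. finite (Act s') \<and> Act s' \<noteq> {}"
    and "\<forall>s' a. norm (phi s' a) \<le> 1"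
    and "\<forall>i d. 0 < beta i d"
    and "\<forall>i\<in>{1..<t}. ha i \<in> Act (hs i) \<and> hx i \<in> {0, 1}"
    and "\<forall>i\<in>{1..t}. thbar i \<in> cball 0 S
           \<and> (\<forall>\<theta>\<in>cball 0 S. loss lam fs hx i (thbar i) \<le> loss lam fs hx i \<theta>)"
    and "\<forall>i\<in>{1..<t}. thp i \<in> Econf lam S fs hx (beta i \<delta>) i (thbar i)
           \<and> (\<forall>\<theta>\<in>Econf lam S fs hx (beta i \<delta>) i (thbar i).
                 mudot (fs i \<bullet> thp i) \<le> mudot (fs i \<bullet> \<theta>))"
    and "sel \<in> measurable borel (count_space UNIV)"
    and "\<forall>\<theta>. sel \<theta> \<in> Act s \<and>
           (\<forall>a\<in>Act s. mudot (phi s a \<bullet> thbar t) * \<bar>phi s a \<bullet> \<theta>\<bar>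
                       \<le> mudot (phi s (sel \<theta>) \<bullet> thbar t) * \<bar>phi s (sel \<theta>) \<bullet> \<theta>\<bar>)"
    and "amu \<in> Act s"
    and "\<forall>a\<in>Act s.
           (SUP \<theta>\<in>Vset lam S fs hx beta \<delta> thbar t. mudot (phi s a \<bullet> \<theta>) * wnorm (matrix_inv Lt) (phi s a))
         \<le> (SUP \<theta>\<in>Vset lam S fs hx beta \<delta> thbar t. mudot (phi s amu \<bullet> \<theta>) * wnorm (matrix_inv Lt) (phi s amu))"
  shows "(INF \<theta>\<in>Econf lam S fs hx (beta t \<delta>) t (thbar t). U phi s amu \<theta> Lt) * Iint phi s amu Lt
           \<le> (\<integral>\<theta>. U phi s (sel \<theta>) (thbar t) Lt \<partial>gauss_prec Lt)"
proof -
  let ?E = "Econf lam S fs hx (beta t \<delta>) t (thbar t)"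
  obtain e l where "pd_eigendecomposition Lt e l"
    using Lmat_pd_eigendecomposition[OF \<open>0 < lam\<close>] unfolding Lt_def by blast
  then interpret pd_eigendecomposition Lt e l .
  have "thbar t \<in> ?E" using assms(12) \<open>1 \<le> t\<close> by (auto simp: Econf_def)
  then have "(INF \<theta>\<in>?E. U phi s amu \<theta> Lt) \<le> U phi s amu (thbar t) Lt"
    by (auto intro!: cINF_lower bdd_belowI[of _ 0] simp: U_def mudot_nonneg wnorm_matrix_inv_nonneg)
  moreover have "0 \<le> Iint phi s amu Lt" unfolding Iint_def by (rule integral_nonneg_AE) simp
  ultimately have "(INF \<theta>\<in>?E. U phi s amu \<theta> Lt) * Iint phi s amu Lt
      \<le> U phi s amu (thbar t) Lt * Iint phi s amu Lt"
    by (rule mult_right_mono)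
  also have "\<dots> = mudot (phi s amu \<bullet> thbar t) * (wnorm (matrix_inv Lt) (phi s amu) * Iint phi s amu Lt)"
    by (simp add: U_def)
  also have "\<dots> \<le> mudot (phi s amu \<bullet> thbar t)
      * (wnorm (matrix_inv Lt) (phi s amu) * (\<integral>x. \<bar>x \<bullet> sgn (whiten (phi s amu))\<bar> \<partial>sphere_unif))"
    by (intro mult_left_mono wnorm_mult_Iint_le mudot_nonneg)
  also have "\<dots> \<le> (\<integral>\<theta>. U phi s (sel \<theta>) (thbar t) Lt \<partial>gauss_prec Lt)"
    using assms(8,14,15,16) by (intro integral_selected_uncertainty_ge[of _ "Act s"]) auto
  finally show ?thesis .
qed

end
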